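(* Let $\sigma,\eta>0$ and $\mathscr{C}$ be a family of balls as in the context. There exists a constant $C=C(\mathscr{C})>0$ such that $|B|^{1/3}\le C(1+|x_B|)$ for all $B\in\mathscr{C}$.
   Context: Cover: for constants $\sigma,\eta>0$, $\mathscr{C}$ is a family of closed balls in $\mathbb{R}^3$ with $\bigcup_{B\in\mathscr{C}}B=\mathbb{R}^3$ and $|B|\geq 4\pi/3$ for all $B\in\mathscr{C}$, such that (i) each ball in $\mathscr{C}$ intersects at most $\sigma$ balls in $\mathscr{C}$, and (ii) if $B,B'\in\mathscr{C}$ intersect then $\eta^{-1}\le |B|^{1/3}/|B'|^{1/3}\le\eta$. Here $|B|$ is the volume and $x_B$ the center of $B$. *)

theory Defs
  imports "HOL-Analysis.Analysis"
begin

text \<open>A closed ball in R^3 is represented by its center and radius (radius > 0);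
  the ball itself is cball x r, its volume is its Lebesgue measure.\<close>

definition ball_vol :: "(real^3) \<times> real \<Rightarrow> real" where
  "ball_vol b = measure lebesgue (cball (fst b) (snd b))"

definition ball_set :: "(real^3) \<times> real \<Rightarrow> (real^3) set" where
  "ball_set b = cball (fst b) (snd b)"

definition is_cover :: "real \<Rightarrow> real \<Rightarrow> ((real^3) \<times> real) set \<Rightarrow> bool" where
  "is_cover \<sigma> \<eta> \<C> \<longleftrightarrow>
     (\<forall>b\<in>\<C>. snd b > 0) \<and>
     (\<Union>b\<in>\<C>. ball_set b) = UNIV \<and>
     (\<forall>b\<in>\<C>. ball_vol b \<ge> 4 * pi / 3) \<and>
     (\<forall>b\<in>\<C>. finite {b'\<in>\<C>. b' \<noteq> b \<and> ball_set b \<inter> ball_set b' \<noteq> {}} \<and>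
              real (card {b'\<in>\<C>. b' \<noteq> b \<and> ball_set b \<inter> ball_set b' \<noteq> {}}) \<le> \<sigma>) \<and>
     (\<forall>b\<in>\<C>. \<forall>b'\<in>\<C>. ball_set b \<inter> ball_set b' \<noteq> {} \<longrightarrow>
        inverse \<eta> \<le> ball_vol b powr (1/3) / ball_vol b' powr (1/3) \<and>
        ball_vol b powr (1/3) / ball_vol b' powr (1/3) \<le> \<eta>)"

end

theory Submission
  imports Defs
begin

text \<open>Fix a ball \<open>B\<^sub>0\<close> of the cover containing the origin. A ball \<open>B\<close> that contains the
  origin meets \<open>B\<^sub>0\<close>, so \<open>|B|^(1/3) \<le> \<eta> |B\<^sub>0|^(1/3)\<close>. A ball that misses the origin has
  radius \<open>r < |x\<^sub>B|\<close>, and \<open>|B|^(1/3) \<le> 2r\<close> because \<open>4\<pi>/3 \<le> 8\<close>. Only the covering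
  property and condition (ii) are needed.\<close>

lemma ball_vol_eq: "0 \<le> r \<Longrightarrow> ball_vol (x, r) = 4 / 3 * pi * r ^ 3"
proof -
  assume "0 \<le> r"
  have "measure lebesgue (cball x r) = measure lborel (cball x r)"
    by (simp add: measure_completion)
  also have "\<dots> = unit_ball_vol 3 * r ^ 3"
    using content_cball[OF \<open>0 \<le> r\<close>, of x] by simp
  finally show ?thesis
    unfolding ball_vol_def by (simp add: unit_ball_vol_3)
qed

lemma ball_vol_cbrt_le: "0 \<le> r \<Longrightarrow> ball_vol (x, r) powr (1/3) \<le> 2 * r"
proof -
  assume "0 \<le> r"
  have "4 / 3 * pi * r ^ 3 \<le> 8 * r ^ 3"
    using pi_less_4 \<open>0 \<le> r\<close> by (intro mult_right_mono) auto
  then have "ball_vol (x, r) \<le> 8 * r ^ 3"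
    by (simp add: ball_vol_eq[OF \<open>0 \<le> r\<close>])
  also have "\<dots> = (2 * r) powr 3"
    using \<open>0 \<le> r\<close> by (simp add: powr_mult powr_numeral)
  finally have "ball_vol (x, r) powr (1/3) \<le> ((2 * r) powr 3) powr (1/3)"
    by (intro powr_mono2) (auto simp: ball_vol_def)
  also have "\<dots> = 2 * r"
    using \<open>0 \<le> r\<close> by (subst powr_powr) simp
  finally show ?thesis .
qed

lemma cover_ball_vol_pos:
  assumes "is_cover \<sigma> \<eta> \<C>" and "b \<in> \<C>"
  shows "0 < ball_vol b"
proof -
  have "4 * pi / 3 \<le> ball_vol b"
    using assms by (simp add: is_cover_def)
  then show ?thesis
    using pi_gt_zero by linarith
qed

lemma cover_ball_vol_cbrt_le_neighbour:
  assumes "is_cover \<sigma> \<eta> \<C>" and "b \<in> \<C>" and "b' \<in> \<C>"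
    and "ball_set b \<inter> ball_set b' \<noteq> {}"
  shows "ball_vol b powr (1/3) \<le> \<eta> * ball_vol b' powr (1/3)"
proof -
  have "ball_vol b powr (1/3) / ball_vol b' powr (1/3) \<le> \<eta>"
    using assms unfolding is_cover_def by blast
  then show ?thesis
    using cover_ball_vol_pos[OF assms(1,3)] by (simp add: divide_le_eq)
qed

theorem corollary3p3:
  fixes \<sigma> \<eta> :: real and \<C> :: "((real^3) \<times> real) set"
  assumes "\<sigma> > 0" and "\<eta> > 0" and "is_cover \<sigma> \<eta> \<C>"
  shows "\<exists>C>0. \<forall>b\<in>\<C>. ball_vol b powr (1/3) \<le> C * (1 + norm (fst b))"
proof -
  have "(\<Union>b\<in>\<C>. ball_set b) = UNIV"
    using assms(3) by (simp add: is_cover_def)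
  then obtain b\<^sub>0 where "b\<^sub>0 \<in> \<C>" and "0 \<in> ball_set b\<^sub>0"
    by (metis UNIV_I UN_E)
  define C where "C = max 2 (\<eta> * ball_vol b\<^sub>0 powr (1/3))"
  have "ball_vol b powr (1/3) \<le> C * (1 + norm (fst b))" if "b \<in> \<C>" for b
  proof (cases "0 \<in> ball_set b")
    case True
    then have "ball_vol b powr (1/3) \<le> \<eta> * ball_vol b\<^sub>0 powr (1/3)"
      using cover_ball_vol_cbrt_le_neighbour[OF assms(3) \<open>b \<in> \<C>\<close> \<open>b\<^sub>0 \<in> \<C>\<close>] \<open>0 \<in> ball_set b\<^sub>0\<close>
      by blast
    also have "\<dots> \<le> C * 1"
      unfolding C_def by simp
    also have "\<dots> \<le> C * (1 + norm (fst b))"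
      unfolding C_def by (intro mult_left_mono) auto
    finally show ?thesis .
  next
    case False
    have "ball_vol b powr (1/3) \<le> 2 * snd b"
      using ball_vol_cbrt_le[of "snd b" "fst b"] assms(3) \<open>b \<in> \<C>\<close>
      by (simp add: is_cover_def less_imp_le)
    also have "\<dots> \<le> 2 * (1 + norm (fst b))"
      using False by (simp add: ball_set_def dist_norm)
    also have "\<dots> \<le> C * (1 + norm (fst b))"
      unfolding C_def by (intro mult_right_mono) auto
    finally show ?thesis .
  qed
  moreover have "C > 0"
    unfolding C_def by simp
  ultimately show ?thesis by blast
qed

end
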